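(* Let $(\Omega,Z)$, with $\Omega:[0,1]\times[t_0,\infty)\to\mathbb{R}^2$ and $Z:[t_0,\infty)\to\mathbb{R}^n$, be a (classical) solution of the target system \begin{align*} \partial_t \Omega(x,t) &= E\,\partial_x^2 \Omega(x,t), && x\in(0,1),\\ \dot Z(t) &= (A+B\Gamma_0)Z(t) + B\Theta\,\Omega(0,t),\\ \alpha\,\partial_x\Omega(0,t) &= -\beta\,\Omega(0,t),\\ \Omega(1,t) &= 0 . \end{align*} Then the trivial solution $(\Omega,Z)\equiv 0$ is exponentially stable in the $L^2\times\mathbb{R}^n$ norm: there exist constants $\Pi,\mu>0$, independent of the solution, such that for all $t\ge t_0$ $$\|(\Omega(\cdot,t),Z(t))\|\le \Pi\, e^{-\mu(t-t_0)}\,\|(\Omega(\cdot,t_0),Z(t_0))\|.$$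
   Context: Fix $\varepsilon>0$ and $y_0\in(-1,0)$. Set $\varepsilon_1=\varepsilon/(1+y_0)^2$, $\varepsilon_2=\varepsilon/(1-y_0)^2$ (so $\varepsilon_1>\varepsilon_2>0$), $a=(1+y_0)/(1-y_0)\in(0,1)$, $E=\mathrm{diag}(\varepsilon_1,\varepsilon_2)$, $\alpha=\begin{pmatrix}1&a\\0&0\end{pmatrix}$, $\beta=\begin{pmatrix}0&0\\1&-1\end{pmatrix}$, and $\Theta=(\theta,\ 1-\theta)$ for a fixed $\theta\in[0,1]$. Thus the boundary condition at $x=0$ means $\partial_x\Omega_1(0,t)+a\,\partial_x\Omega_2(0,t)=0$ and $\Omega_1(0,t)=\Omega_2(0,t)$. $A\in\mathbb{R}^{n\times n}$, $B\in\mathbb{R}^{n\times 1}$, and $\Gamma_0\in\mathbb{R}^{1\times n}$ is such that $A+B\Gamma_0$ is Hurwitz. For $f\in L^2(0,1;\mathbb{R}^2)$ and $v\in\mathbb{R}^n$, $\|(f,v)\|=\big(\|f\|_{L^2}^2+|v|_2^2\big)^{1/2}$ with $\|f\|_{L^2}^2=\int_0^1|f(x)|_2^2dx$. *)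

theory Defs
  imports "HOL-Analysis.Analysis"
begin

definition hurwitz :: "real^'n^'n \<Rightarrow> bool" where
  "hurwitz M \<longleftrightarrow>
     (\<forall>(lam::complex) (v::complex^'n). v \<noteq> 0 \<and>
        (\<chi> i j. complex_of_real (M $ i $ j)) *v v = lam *s v \<longrightarrow> Re lam < 0)"

definition outer :: "real^'n \<Rightarrow> real^'n \<Rightarrow> real^'n^'n" where
  "outer b g = (\<chi> i j. b $ i * g $ j)"

text \<open>Classical solution (Omega = (Om1, Om2), Z) of the target system on [0,1] x [t0, infinity),
  with E = diag(eps/(1+y0)^2, eps/(1-y0)^2), a = (1+y0)/(1-y0), Theta = (theta, 1-theta).
  Om1x, Om2x, Om1xx, Om2xx, Om1t, Om2t are the partial derivatives
  (one-sided in x at the endpoints x = 0, 1).\<close>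
definition target_solution ::
  "real \<Rightarrow> real \<Rightarrow> real \<Rightarrow> real^'n^'n \<Rightarrow> real^'n \<Rightarrow> real^'n \<Rightarrow> real \<Rightarrow>
   (real \<Rightarrow> real \<Rightarrow> real) \<Rightarrow> (real \<Rightarrow> real \<Rightarrow> real) \<Rightarrow> (real \<Rightarrow> real^'n) \<Rightarrow> bool" where
  "target_solution eps y0 theta A B Gamma0 t0 Om1 Om2 Z \<longleftrightarrow>
    (let eps1 = eps / (1 + y0)^2; eps2 = eps / (1 - y0)^2; a = (1 + y0) / (1 - y0) in
     continuous_on ({0..1} \<times> {t0..}) (\<lambda>(x,t). Om1 x t) \<and>
     continuous_on ({0..1} \<times> {t0..}) (\<lambda>(x,t). Om2 x t) \<and>
     (\<exists>Om1x Om2x Om1xx Om2xx Om1t Om2t.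
        (\<forall>x\<in>{0..1}. \<forall>t>t0.
            ((\<lambda>y. Om1 y t) has_real_derivative Om1x x t) (at x within {0..1}) \<and>
            ((\<lambda>y. Om2 y t) has_real_derivative Om2x x t) (at x within {0..1}) \<and>
            ((\<lambda>y. Om1x y t) has_real_derivative Om1xx x t) (at x within {0..1}) \<and>
            ((\<lambda>y. Om2x y t) has_real_derivative Om2xx x t) (at x within {0..1}) \<and>
            ((\<lambda>s. Om1 x s) has_real_derivative Om1t x t) (at t) \<and>
            ((\<lambda>s. Om2 x s) has_real_derivative Om2t x t) (at t)) \<and>
        continuous_on ({0..1} \<times> {t0<..}) (\<lambda>(x,t). Om1x x t) \<and>
        continuous_on ({0..1} \<times> {t0<..}) (\<lambda>(x,t). Om2x x t) \<and>
        continuous_on ({0..1} \<times> {t0<..}) (\<lambda>(x,t). Om1xx x t) \<and>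
        continuous_on ({0..1} \<times> {t0<..}) (\<lambda>(x,t). Om2xx x t) \<and>
        continuous_on ({0..1} \<times> {t0<..}) (\<lambda>(x,t). Om1t x t) \<and>
        continuous_on ({0..1} \<times> {t0<..}) (\<lambda>(x,t). Om2t x t) \<and>
        (\<forall>x\<in>{0<..<1}. \<forall>t>t0.
            Om1t x t = eps1 * Om1xx x t \<and> Om2t x t = eps2 * Om2xx x t) \<and>
        (\<forall>t>t0. Om1x 0 t + a * Om2x 0 t = 0 \<and> Om1 0 t = Om2 0 t)) \<and>
     (\<forall>t\<ge>t0. Om1 1 t = 0 \<and> Om2 1 t = 0) \<and>
     (\<forall>t\<ge>t0. (Z has_vector_derivative
         ((A + outer B Gamma0) *v Z t + (theta * Om1 0 t + (1 - theta) * Om2 0 t) *\<^sub>R B))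
         (at t within {t0..})))"

definition state_norm ::
  "(real \<Rightarrow> real \<Rightarrow> real) \<Rightarrow> (real \<Rightarrow> real \<Rightarrow> real) \<Rightarrow> (real \<Rightarrow> real^'n) \<Rightarrow> real \<Rightarrow> real" where
  "state_norm Om1 Om2 Z t =
     sqrt (integral {0..1} (\<lambda>x. (Om1 x t)^2 + (Om2 x t)^2) + (norm (Z t))^2)"

end

theory Submission
  imports Defs "Jordan_Normal_Form.Spectral_Radius"
begin

text \<open>Since \<open>A + B Gamma0\<close> is Hurwitz, for small \<open>h > 0\<close> the spectrum of the explicit Euler step
  \<open>I + h (A + B Gamma0)\<close> lies in a disc of radius \<open>r < 1\<close>, so its powers decay like \<open>r^k\<close>
  (Jordan normal form). Summing the squares of the orbits gives a quadratic form \<open>P\<close> with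
  \<open>2 P(z, (A + B Gamma0) z) \<le> -|z|^2\<close>.
  The weighted heat energy \<open>V = |Omega1|^2 + w |Omega2|^2\<close>, \<open>w = (1 - y0) / (1 + y0)\<close>, has no
  boundary contribution at \<open>x = 0\<close>, because the weight balances the flux condition there; it
  dissipates at rate \<open>2 D\<close> with \<open>D = eps1 |Omega1_x|^2 + w eps2 |Omega2_x|^2\<close>, and Poincare-type
  inequalities let \<open>D\<close> dominate both \<open>V\<close> and the trace \<open>Omega(0,t)\<close> that drives \<open>Z\<close>.
  Hence \<open>W = kappa V + P(Z,Z)\<close> satisfies \<open>W' \<le> -c W\<close> for large \<open>kappa\<close>, and \<open>W\<close> is
  equivalent to the squared \<open>L^2 \<times> R^n\<close> norm.\<close>

section \<open>Hurwitz matrices and quadratic Lyapunov forms\<close>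

text \<open>The spectral-radius bounds of Jordan_Normal_Form are stated for \<open>nat\<close>-indexed matrices;
  an enumeration \<open>e\<close> of the finite index type transports vectors and matrices there.\<close>

locale cart_enumeration =
  fixes e :: "nat \<Rightarrow> 'n::finite"
  assumes bij_e: "bij_betw e {..<CARD('n)} UNIV"
begin

definition index :: "'n \<Rightarrow> nat" where
  "index = inv_into {..<CARD('n)} e"

lemma index_less: "index i < CARD('n)"
  and e_index [simp]: "e (index i) = i"
  using bij_betw_inv_into_right[OF bij_e] bij_betw_inv_into[OF bij_e]
  unfolding index_def bij_betw_def by auto

lemma index_e [simp]: "k < CARD('n) \<Longrightarrow> index (e k) = k"
  using bij_betw_inv_into_left[OF bij_e] unfolding index_def by auto

definition mat_of :: "'a^'n^'n \<Rightarrow> 'a mat" where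
  "mat_of N = mat CARD('n) CARD('n) (\<lambda>(i,j). N $ e i $ e j)"

definition vec_of :: "'a^'n \<Rightarrow> 'a vec" where
  "vec_of v = vec CARD('n) (\<lambda>i. v $ e i)"

lemma mat_of_carrier [simp]: "mat_of N \<in> carrier_mat CARD('n) CARD('n)"
  by (simp add: mat_of_def)

lemma vec_of_carrier [simp]: "vec_of v \<in> carrier_vec CARD('n)"
  by (simp add: vec_of_def)

lemma vec_of_index [simp]: "vec_index (vec_of v) (index i) = v $ i"
  by (simp add: vec_of_def index_less)

lemma vec_of_inject: "vec_of v = vec_of w \<Longrightarrow> v = w"
  unfolding Finite_Cartesian_Product.vec_eq_iff by (metis vec_of_index)

lemma vec_of_surj:
  assumes "u \<in> carrier_vec CARD('n)"
  shows "vec_of (\<chi> i. vec_index u (index i)) = u"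
  using assms by (intro eq_vecI) (auto simp: vec_of_def)

lemma vec_of_zero [simp]: "vec_of 0 = 0\<^sub>v CARD('n)"
  by (intro eq_vecI) (auto simp: vec_of_def)

lemma vec_of_smult: "vec_of (c *s v) = c \<cdot>\<^sub>v vec_of v"
  by (intro eq_vecI) (auto simp: vec_of_def)

lemma vec_of_mult:
  fixes N :: "'a::comm_semiring_1^'n^'n"
  shows "vec_of (N *v v) = mat_of N *\<^sub>v vec_of v"
proof (rule eq_vecI)
  fix i assume "i < dim_vec (mat_of N *\<^sub>v vec_of v)"
  hence i: "i < CARD('n)" by (simp add: mat_of_def)
  have "vec_index (mat_of N *\<^sub>v vec_of v) i = (\<Sum>j<CARD('n). N $ e i $ e j * v $ e j)"
    using i by (simp add: mat_of_def vec_of_def scalar_prod_def row_def lessThan_atLeast0)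
  also have "\<dots> = (\<Sum>j\<in>UNIV. N $ e i $ j * v $ j)"
    by (rule sum.reindex_bij_betw[OF bij_e])
  finally show "vec_index (vec_of (N *v v)) i = vec_index (mat_of N *\<^sub>v vec_of v) i"
    using i by (simp add: vec_of_def matrix_vector_mult_def)
qed (simp add: mat_of_def vec_of_def)

lemma vec_of_funpow_mult:
  fixes N :: "'a::comm_semiring_1^'n^'n"
  shows "vec_of (((*v) N ^^ k) v) = mat_of N ^\<^sub>m k *\<^sub>v vec_of v"
proof (induction k arbitrary: v)
  case (Suc k)
  have "vec_of (((*v) N ^^ Suc k) v) = mat_of N ^\<^sub>m k *\<^sub>v (mat_of N *\<^sub>v vec_of v)"
    by (simp add: funpow_Suc_right vec_of_mult Suc del: funpow.simps)
  also have "\<dots> = mat_of N ^\<^sub>m Suc k *\<^sub>v vec_of v"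
    by (simp add: assoc_mult_mat_vec[of _ "CARD('n)" "CARD('n)" _ "CARD('n)"])
  finally show ?case .
qed (simp add: mat_of_def)

lemma eigenvalue_mat_of_iff:
  fixes N :: "'a::comm_ring_1^'n^'n"
  shows "eigenvalue (mat_of N) c \<longleftrightarrow> (\<exists>w. w \<noteq> 0 \<and> N *v w = c *s w)"
proof
  assume "eigenvalue (mat_of N) c"
  then obtain u where u: "u \<in> carrier_vec CARD('n)" "u \<noteq> 0\<^sub>v CARD('n)" "mat_of N *\<^sub>v u = c \<cdot>\<^sub>v u"
    unfolding eigenvalue_def eigenvector_def by (auto simp: mat_of_def)
  define w where "w = (\<chi> i. vec_index u (index i))"
  have "vec_of w = u" unfolding w_def by (rule vec_of_surj[OF u(1)])
  with u have "w \<noteq> 0" "vec_of (N *v w) = vec_of (c *s w)"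
    by (auto simp: vec_of_mult vec_of_smult)
  thus "\<exists>w. w \<noteq> 0 \<and> N *v w = c *s w" by (blast dest: vec_of_inject)
next
  assume "\<exists>w. w \<noteq> 0 \<and> N *v w = c *s w"
  then obtain w where "w \<noteq> 0" "N *v w = c *s w" by blast
  hence "vec_of w \<noteq> 0\<^sub>v CARD('n)" "mat_of N *\<^sub>v vec_of w = c \<cdot>\<^sub>v vec_of w"
    by (metis vec_of_inject vec_of_zero, metis vec_of_mult vec_of_smult)
  thus "eigenvalue (mat_of N) c"
    unfolding eigenvalue_def eigenvector_def
    by (intro exI[of _ "vec_of w"]) (simp add: mat_of_def)
qed

end

lemma scaleR_matrix_vector_assoc:
  fixes A :: "'a::real_algebra_1^'n^'m"
  shows "(c *\<^sub>R A) *v x = c *\<^sub>R (A *v x)"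
  by (simp add: Finite_Cartesian_Product.vec_eq_iff matrix_vector_mult_def scaleR_sum_right)

lemma euler_step_contracts_left_half_plane:
  fixes S :: "complex set"
  assumes "finite S" and "\<And>z. z \<in> S \<Longrightarrow> Re z < 0"
  obtains h r where "h > 0" "0 < r" "r < 1" "\<And>z. z \<in> S \<Longrightarrow> cmod (1 + of_real h * z) < r"
proof (cases "S = {}")
  case True
  thus ?thesis using that[of 1 "1/2"] by simp
next
  case False
  define d where "d = Min ((\<lambda>z. - Re z) ` S)"
  define R where "R = Max (norm ` S)"
  have d_le: "d \<le> - Re z" and norm_le: "cmod z \<le> R" if "z \<in> S" for z
    using that assms(1) by (auto simp: d_def R_def)
  have "d > 0" unfolding d_def using assms False by (subst Min_gr_iff) auto
  moreover obtain z0 where "z0 \<in> S" using False by blast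
  ultimately have "d \<le> R" "R > 0"
    using d_le norm_le abs_Re_le_cmod[of z0] by (fastforce, fastforce)
  define h where "h = d / R^2"
  define r where "r = sqrt (1 - h * d / 2)"
  have "h > 0" "h * R^2 = d" using \<open>d > 0\<close> \<open>R > 0\<close> by (auto simp: h_def)
  have "h * d \<le> 1"
    using \<open>d > 0\<close> \<open>d \<le> R\<close> by (simp add: h_def power2_eq_square divide_le_eq_1 mult_mono')
  hence r2: "r^2 = 1 - h * d / 2" and "0 < r" "r < 1"
    using \<open>h > 0\<close> \<open>d > 0\<close> by (auto simp: r_def)
  have "cmod (1 + of_real h * z) < r" if "z \<in> S" for z
  proof -
    have "(cmod (1 + of_real h * z))^2 = (1 + h * Re z)^2 + (h * Im z)^2"
      by (simp add: cmod_power2)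
    also have "\<dots> = 1 + 2 * h * Re z + h^2 * ((Re z)^2 + (Im z)^2)"
      by (simp add: power2_eq_square algebra_simps)
    also have "\<dots> = 1 + 2 * h * Re z + h^2 * (cmod z)^2"
      by (simp add: cmod_power2)
    also have "\<dots> \<le> 1 + 2 * h * Re z + h * d"
      using \<open>h * R^2 = d\<close> norm_le[OF that] \<open>h > 0\<close>
      by (metis add_left_mono mult.assoc mult_left_mono norm_ge_zero power_mono zero_le_power2 power2_eq_square)
    also have "\<dots> < r^2"
    proof -
      have "h * d \<le> - (h * Re z)"
        using mult_left_mono[OF d_le[OF that] less_imp_le[OF \<open>h > 0\<close>]] by simp
      thus ?thesis using mult_pos_pos[OF \<open>h > 0\<close> \<open>d > 0\<close>] unfolding r2 by linarith
    qed
    finally show ?thesis using \<open>0 < r\<close> by (simp add: power_less_imp_less_base)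
  qed
  thus ?thesis using that \<open>h > 0\<close> \<open>0 < r\<close> \<open>r < 1\<close> by blast
qed

lemma norm_mult_mat_vec_le:
  fixes A :: "complex mat"
  assumes "A \<in> carrier_mat n n" "norm_bound A c" "v \<in> carrier_vec n" "i < n"
    and "\<And>j. j < n \<Longrightarrow> cmod (vec_index v j) \<le> b"
  shows "cmod (vec_index (A *\<^sub>v v) i) \<le> n * c * b"
proof -
  have "cmod (A $$ (i,i)) \<le> c" using assms(1,2,4) unfolding norm_bound_def by auto
  hence "0 \<le> c" by (meson norm_ge_zero order.trans)
  have "cmod (vec_index (A *\<^sub>v v) i) = cmod (\<Sum>j<n. A $$ (i,j) * vec_index v j)"
    using assms(1,3,4) by (simp add: scalar_prod_def lessThan_atLeast0)
  also have "\<dots> \<le> (\<Sum>j<n. cmod (A $$ (i,j)) * cmod (vec_index v j))"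
    by (rule order.trans[OF norm_sum]) (simp add: norm_mult)
  also have "\<dots> \<le> (\<Sum>j<n. c * b)"
    using assms \<open>0 \<le> c\<close> unfolding norm_bound_def by (intro sum_mono mult_mono) auto
  finally show ?thesis by simp
qed

lemma (in cart_enumeration) euler_step_spectral_radius:
  fixes M :: "complex^'n^'n"
  assumes "\<And>z. z \<in> spectrum (mat_of M) \<Longrightarrow> Re z < 0"
  obtains h r where "h > 0" "0 < r" "r < 1"
    "spectral_radius (mat_of ((1 / r) *\<^sub>R (Finite_Cartesian_Product.mat 1 + h *\<^sub>R M))) < 1"
proof -
  obtain h r where h: "h > 0" and r: "0 < r" "r < 1"
    and contracts: "\<And>z. z \<in> spectrum (mat_of M) \<Longrightarrow> cmod (1 + of_real h * z) < r"
    using euler_step_contracts_left_half_plane[OF card_finite_spectrum(1)[OF mat_of_carrier] assms] by blast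
  define N where "N = (1 / r) *\<^sub>R (Finite_Cartesian_Product.mat 1 + h *\<^sub>R M)"
  have "cmod \<nu> < 1" if \<nu>: "\<nu> \<in> spectrum (mat_of N)" for \<nu>
  proof -
    obtain w where "w \<noteq> 0" and eigen: "N *v w = \<nu> *s w"
      using \<nu> by (auto simp: spectrum_def eigenvalue_mat_of_iff)
    have "(M *v w) $ i = ((of_real r * \<nu> - 1) / of_real h) * w $ i" for i
    proof -
      have "(w $ i + of_real h * (M *v w) $ i) / of_real r = \<nu> * w $ i"
        using arg_cong[OF eigen, of "\<lambda>v. v $ i"]
        by (simp add: N_def scaleR_matrix_vector_assoc matrix_vector_mult_add_rdistrib
            scaleR_conv_of_real[where 'a=complex])
      thus ?thesis using h r by (simp add: field_simps)
    qed
    hence "M *v w = ((of_real r * \<nu> - 1) / of_real h) *s w"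
      by (simp add: Finite_Cartesian_Product.vec_eq_iff)
    with \<open>w \<noteq> 0\<close> have "cmod (1 + of_real h * ((of_real r * \<nu> - 1) / of_real h)) < r"
      by (intro contracts) (auto simp: spectrum_def eigenvalue_mat_of_iff)
    thus ?thesis using h r by (simp add: norm_mult)
  qed
  hence "spectral_radius (mat_of N) < 1"
    using spectral_radius_mem_max(1)[OF mat_of_carrier] by fastforce
  with h r show thesis unfolding N_def by (rule that)
qed

lemma hurwitz_euler_decay:
  fixes M :: "real^'n^'n"
  assumes "hurwitz M"
  obtains h r C where "h > 0" "0 < r" "r < 1"
    "\<And>k y. norm (((\<lambda>y. y + h *\<^sub>R (M *v y)) ^^ k) y) \<le> C * r^k * norm y"
proof -
  obtain e :: "nat \<Rightarrow> 'n" where "bij_betw e {..<CARD('n)} UNIV"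
    using ex_bij_betw_nat_finite[of "UNIV :: 'n set"] by (auto simp: lessThan_atLeast0)
  then interpret cart_enumeration e by unfold_locales
  define Mc where "Mc = map_matrix complex_of_real M"
  have "Re z < 0" if "z \<in> spectrum (mat_of Mc)" for z
    using that assms unfolding spectrum_def hurwitz_def Mc_def map_matrix_def
    by (auto simp: eigenvalue_mat_of_iff)
  then obtain h r where h: "h > 0" and r: "0 < r" "r < 1"
    and "spectral_radius (mat_of ((1 / r) *\<^sub>R (Finite_Cartesian_Product.mat 1 + h *\<^sub>R Mc))) < 1"
    by (rule euler_step_spectral_radius)
  moreover define N where "N = (1 / r) *\<^sub>R (Finite_Cartesian_Product.mat 1 + h *\<^sub>R Mc)"
  ultimately obtain c where c: "\<And>k. norm_bound (mat_of N ^\<^sub>m k) c"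
    using spectral_radius_jnf_norm_bound_less_1_upper_triangular[OF mat_of_carrier] by blast
  define T where "T = (\<lambda>y::real^'n. y + h *\<^sub>R (M *v y))"
  define cvec where "cvec y = (\<chi> i. complex_of_real (y $ i))" for y :: "real^'n"
  have "Mc *v cvec y = cvec (M *v y)" for y
    by (simp add: Finite_Cartesian_Product.vec_eq_iff cvec_def Mc_def matrix_vector_mult_def)
  hence step: "cvec (T y) = r *\<^sub>R (N *v cvec y)" for y
    using r by (simp add: Finite_Cartesian_Product.vec_eq_iff T_def cvec_def N_def
        scaleR_matrix_vector_assoc matrix_vector_mult_add_rdistrib scaleR_conv_of_real[where 'a=complex])
  have N_scaleR: "N *v (c *\<^sub>R v) = c *\<^sub>R (N *v v)" for c v
    by (rule linear_scale[OF bounded_linear.linear[OF matrix_vector_mul_bounded_linear]])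
  have iterate: "cvec ((T ^^ k) y) = r^k *\<^sub>R ((*v) N ^^ k) (cvec y)" for k y
    by (induction k) (simp_all add: step N_scaleR)
  have component: "\<bar>(T ^^ k) y $ i\<bar> \<le> r^k * (CARD('n) * c * norm y)" for k y i
  proof -
    have "\<bar>(T ^^ k) y $ i\<bar> = r^k * cmod (vec_index (mat_of N ^\<^sub>m k *\<^sub>v vec_of (cvec y)) (index i))"
      using arg_cong[OF iterate, of "\<lambda>v. cmod (v $ i)"] r
      by (simp add: cvec_def norm_mult vec_of_funpow_mult[symmetric])
    also have "\<dots> \<le> r^k * (CARD('n) * c * norm y)"
      using r index_less by (intro mult_left_mono norm_mult_mat_vec_le[OF _ c])
        (auto simp: vec_of_def cvec_def component_le_norm_cart)
    finally show ?thesis .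
  qed
  have "norm ((T ^^ k) y) \<le> (CARD('n) * (CARD('n) * c)) * r^k * norm y" for k y
    using order.trans[OF norm_le_l1_cart sum_mono[OF component]] by (simp add: mult_ac)
  with h r show thesis unfolding T_def by (rule that)
qed

definition orbit_form :: "('a::real_inner \<Rightarrow> 'a) \<Rightarrow> 'a \<Rightarrow> 'a \<Rightarrow> real" where
  "orbit_form T x y = (\<Sum>k. inner ((T ^^ k) x) ((T ^^ k) y))"

lemma orbit_form_commute: "orbit_form T x y = orbit_form T y x"
  by (simp add: orbit_form_def inner_commute)

context
  fixes T :: "'a::real_inner \<Rightarrow> 'a" and r C :: real
  assumes r: "0 < r" "r < 1"
    and decay: "\<And>k x. norm ((T ^^ k) x) \<le> C * r^k * norm x"
begin

lemma orbit_inner_le: "\<bar>inner ((T ^^ k) x) ((T ^^ k) y)\<bar> \<le> (C^2 * norm x * norm y) * (r^2)^k"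
proof -
  have decay_abs: "norm ((T ^^ k) x) \<le> \<bar>C\<bar> * r^k * norm x" for x
  proof -
    have "C * (r^k * norm x) \<le> \<bar>C\<bar> * (r^k * norm x)" using r by (intro mult_right_mono) auto
    thus ?thesis using decay[of k x] by (simp add: mult.assoc)
  qed
  have "\<bar>inner ((T ^^ k) x) ((T ^^ k) y)\<bar> \<le> norm ((T ^^ k) x) * norm ((T ^^ k) y)"
    by (rule Cauchy_Schwarz_ineq2)
  also have "\<dots> \<le> (\<bar>C\<bar> * r^k * norm x) * (\<bar>C\<bar> * r^k * norm y)"
    by (rule mult_mono[OF decay_abs decay_abs]) (use r in auto)
  also have "\<dots> = (C^2 * norm x * norm y) * (r^2)^k"
    by (simp add: power2_eq_square power_mult_distrib[symmetric] power_mult[symmetric] mult_ac)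
  finally show ?thesis .
qed

lemma summable_orbit_geometric: "summable (\<lambda>k. (C^2 * norm x * norm y) * (r^2)^k)"
  using r by (intro summable_mult summable_geometric) (simp add: power_less_one_iff abs_square_less_1)

lemma summable_orbit_inner: "summable (\<lambda>k. \<bar>inner ((T ^^ k) x) ((T ^^ k) y)\<bar>)"
  by (rule summable_comparison_test[OF _ summable_orbit_geometric]) (use orbit_inner_le in auto)

lemma bounded_bilinear_orbit_form:
  assumes lin: "linear T"
  shows "bounded_bilinear (orbit_form T)"
proof
  fix a a' b b' :: 'a and c :: real
  have lin_pow: "linear (T ^^ k)" for k
    by (induction k) (simp_all add: linear_compose[OF _ lin, unfolded o_def] linear_id[unfolded id_def])
  note summable = summable_rabs_cancel[OF summable_orbit_inner]
  show "orbit_form T (a + a') b = orbit_form T a b + orbit_form T a' b"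
    "orbit_form T a (b + b') = orbit_form T a b + orbit_form T a b'"
    "orbit_form T (c *\<^sub>R a) b = c *\<^sub>R orbit_form T a b"
    "orbit_form T a (c *\<^sub>R b) = c *\<^sub>R orbit_form T a b"
    unfolding orbit_form_def
    by (simp_all add: linear_add[OF lin_pow] linear_scale[OF lin_pow] inner_add_left inner_add_right
        suminf_add[OF summable summable] suminf_mult[OF summable])
  have "norm (orbit_form T a b) \<le> norm a * norm b * (C^2 / (1 - r^2))" for a b
  proof -
    have "norm (orbit_form T a b) \<le> (\<Sum>k. \<bar>inner ((T ^^ k) a) ((T ^^ k) b)\<bar>)"
      unfolding orbit_form_def real_norm_def by (rule summable_rabs[OF summable_orbit_inner])
    also have "\<dots> \<le> (\<Sum>k. (C^2 * norm a * norm b) * (r^2)^k)"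
      by (rule suminf_le[OF orbit_inner_le summable_orbit_inner summable_orbit_geometric])
    also have "\<dots> = norm a * norm b * (C^2 / (1 - r^2))"
      using r by (simp add: suminf_mult suminf_geometric power_less_one_iff abs_square_less_1)
    finally show ?thesis .
  qed
  thus "\<exists>K. \<forall>a b. norm (orbit_form T a b) \<le> norm a * norm b * K" by blast
qed

lemma orbit_form_nonneg: "0 \<le> orbit_form T x x"
  unfolding orbit_form_def by (rule suminf_nonneg[OF summable_rabs_cancel[OF summable_orbit_inner]]) simp

lemma orbit_form_step: "orbit_form T (T x) (T x) = orbit_form T x x - (norm x)^2"
  using suminf_split_head[OF summable_rabs_cancel[OF summable_orbit_inner[of x x]]]
  by (simp add: orbit_form_def funpow_Suc_right power2_norm_eq_inner del: funpow.simps)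

end

lemma hurwitz_lyapunov_form:
  fixes M :: "real^'n^'n"
  assumes "hurwitz M"
  obtains P m where "bounded_bilinear P" "\<And>x y. P x y = P y x" "m > 0"
    "\<And>x. m * (norm x)^2 \<le> P x x" "\<And>x. 2 * P x (M *v x) \<le> - (norm x ^ 2)"
proof -
  obtain h r C where h: "h > 0" and r: "0 < r" "r < 1"
    and decay: "\<And>k y. norm (((\<lambda>y. y + h *\<^sub>R (M *v y)) ^^ k) y) \<le> C * r^k * norm y"
    using hurwitz_euler_decay[OF assms] by metis
  define T where "T y = y + h *\<^sub>R (M *v y)" for y
  have "linear T"
    unfolding T_def[abs_def]
    by (rule linearI) (simp_all add: matrix_vector_right_distrib matrix_vector_mult_scaleR algebra_simps)
  interpret P0: bounded_bilinear "orbit_form T"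
    by (rule bounded_bilinear_orbit_form[OF r decay \<open>linear T\<close>[unfolded T_def[abs_def]], folded T_def])
  note nonneg = orbit_form_nonneg[OF r decay, folded T_def]
  define P where "P x y = orbit_form T (h *\<^sub>R x) y" for x y
  have bilinear: "bounded_bilinear P"
    unfolding P_def by (rule P0.comp1[OF bounded_linear_scaleR_right])
  have positive: "h * (norm x)^2 \<le> P x x" for x
    using orbit_form_step[OF r decay, folded T_def, of x] nonneg[of "T x"] h
    by (simp add: P_def P0.scaleR_left)
  have "2 * P x (M *v x) \<le> - (norm x ^ 2)" for x
  proof -
    \<comment> \<open>expand the discrete Lyapunov identity in \<open>h\<close> and drop \<open>h^2 orbit_form T (M x) (M x) \<ge> 0\<close>\<close>
    have "orbit_form T (T x) (T x)
        = orbit_form T x x + 2 * P x (M *v x) + h^2 * orbit_form T (M *v x) (M *v x)"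
      using orbit_form_commute[of T "M *v x" x]
      by (simp add: T_def P_def P0.add_left P0.add_right P0.scaleR_left P0.scaleR_right
          power2_eq_square distrib_left)
    thus ?thesis
      using orbit_form_step[OF r decay, folded T_def, of x] nonneg[of "M *v x"]
      by (smt (verit) mult_nonneg_nonneg zero_le_power2)
  qed
  moreover have "P x y = P y x" for x y by (simp add: P_def P0.scaleR_left P0.scaleR_right orbit_form_commute)
  ultimately show thesis using bilinear h positive that by blast
qed

section \<open>Energy estimates for the heat equation on [0,1]\<close>

definition energy :: "(real \<Rightarrow> real \<Rightarrow> real) \<Rightarrow> real \<Rightarrow> real" where
  "energy u t = integral {0..1} (\<lambda>x. (u x t)^2)"

lemma continuous_on_slice:
  assumes "continuous_on (S \<times> A) (\<lambda>(x,t). f x t)" and "s \<in> A"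
  shows "continuous_on S (\<lambda>x. f x s)"
proof -
  have "continuous_on S ((\<lambda>(x,t). f x t) \<circ> (\<lambda>x. (x, s)))"
    by (rule continuous_on_compose[OF _ continuous_on_subset[OF assms(1)]])
       (use assms(2) in \<open>auto intro!: continuous_intros\<close>)
  thus ?thesis by (simp add: o_def)
qed

lemma energy_nonneg: "0 \<le> energy u t"
  unfolding energy_def
  by (cases "(\<lambda>x. (u x t)^2) integrable_on {0..1}") (auto intro: integral_nonneg simp: not_integrable_integral)

lemma continuous_on_energy:
  assumes "continuous_on ({0..1} \<times> A) (\<lambda>(x,t). u x t)"
  shows "continuous_on A (energy u)"
proof -
  have "continuous_on (A \<times> cbox 0 1) (\<lambda>(t,x). (u x t)^2)"
    using continuous_on_swap_args[OF assms]
    by (auto intro!: continuous_intros simp: case_prod_unfold cbox_interval)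
  from integral_continuous_on_param[OF this] show ?thesis
    by (simp add: energy_def[abs_def] cbox_interval)
qed

lemma integration_by_parts_within:
  fixes f f' g g' :: "real \<Rightarrow> real"
  assumes "a \<le> b"
    and df: "\<And>x. x \<in> {a..b} \<Longrightarrow> (f has_real_derivative f' x) (at x within {a..b})"
    and dg: "\<And>x. x \<in> {a..b} \<Longrightarrow> (g has_real_derivative g' x) (at x within {a..b})"
    and "continuous_on {a..b} f'" "continuous_on {a..b} g'"
  shows "integral {a..b} (\<lambda>x. f x * g' x) = f b * g b - f a * g a - integral {a..b} (\<lambda>x. f' x * g x)"
proof -
  have "continuous_on {a..b} f" "continuous_on {a..b} g"
    using df dg DERIV_continuous continuous_on_eq_continuous_within by blast+
  have "((\<lambda>x. f x * g x) has_vector_derivative f' x * g x + f x * g' x) (at x within {a..b})"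
    if "x \<in> {a..b}" for x
    using DERIV_mult[OF df[OF that] dg[OF that]]
    by (simp add: has_real_derivative_iff_has_vector_derivative mult.commute)
  hence "((\<lambda>x. f' x * g x + f x * g' x) has_integral (f b * g b - f a * g a)) {a..b}"
    using fundamental_theorem_of_calculus[OF \<open>a \<le> b\<close>, of "\<lambda>x. f x * g x"] by simp
  moreover have "integral {a..b} (\<lambda>x. f' x * g x + f x * g' x)
      = integral {a..b} (\<lambda>x. f' x * g x) + integral {a..b} (\<lambda>x. f x * g' x)"
    using assms \<open>continuous_on {a..b} f\<close> \<open>continuous_on {a..b} g\<close>
    by (intro integral_add integrable_continuous_interval continuous_intros)
  ultimately show ?thesis by (simp add: integral_unique)
qed

lemma integral_square_by_parts:
  fixes u u' k k' :: "real \<Rightarrow> real"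
  assumes du: "\<And>x. x \<in> {0..1} \<Longrightarrow> (u has_real_derivative u' x) (at x within {0..1})"
    and dk: "\<And>x. (k has_real_derivative k' x) (at x within {0..1})"
    and "continuous_on {0..1} u'" "continuous_on {0..1} k'" and "u 1 = 0"
  shows "integral {0..1} (\<lambda>x. (u x)^2 * k' x) = - ((u 0)^2 * k 0) - integral {0..1} (\<lambda>x. 2 * u x * u' x * k x)"
proof -
  have "continuous_on {0..1} u"
    using du DERIV_continuous continuous_on_eq_continuous_within by blast
  have du2: "((\<lambda>x. (u x)^2) has_real_derivative 2 * u x * u' x) (at x within {0..1})"
    if "x \<in> {0..1}" for x
    using DERIV_mult[OF du[OF that] du[OF that]] by (simp add: power2_eq_square mult.assoc)
  show ?thesis
    using integration_by_parts_within[of 0 1, OF _ du2 dk] assms(3-5) \<open>continuous_on {0..1} u\<close>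
    by (simp add: continuous_intros)
qed

lemma poincare_unit_interval:
  fixes u u' :: "real \<Rightarrow> real"
  assumes du: "\<And>x. x \<in> {0..1} \<Longrightarrow> (u has_real_derivative u' x) (at x within {0..1})"
    and cu': "continuous_on {0..1} u'" and u1: "u 1 = 0"
  shows "integral {0..1} (\<lambda>x. (u x)^2) \<le> 4 * integral {0..1} (\<lambda>x. (u' x)^2)"
    and "(u 0)^2 \<le> 5 * integral {0..1} (\<lambda>x. (u' x)^2)"
proof -
  have cu: "continuous_on {0..1} u"
    using du DERIV_continuous continuous_on_eq_continuous_within by blast
  have int: "f integrable_on {0..1}" if "continuous_on {0..1} f" for f :: "real \<Rightarrow> real"
    using integrable_continuous_interval[OF that] by simp
  define I where "I = integral {0..1} (\<lambda>x. (u x)^2)"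
  define J where "J = integral {0..1} (\<lambda>x. (u' x)^2)"
  have "I = integral {0..1} (\<lambda>x. - (2 * u x * u' x * x))"
    using integral_square_by_parts[OF du _ cu' _ u1, of "\<lambda>x. x" "\<lambda>x. 1"]
    by (simp add: I_def integral_neg)
  also have "\<dots> \<le> integral {0..1} (\<lambda>x. (u x)^2 / 2 + 2 * (u' x)^2)"
  proof (rule integral_le)
    fix x :: real assume x: "x \<in> {0..1}"
    have "- (2 * u x * u' x * x) \<le> (u x)^2 / 2 + 2 * (u' x * x)^2"
      using sum_squares_ge_zero[of "u x / 2 + u' x * x" 0] by (simp add: power2_eq_square algebra_simps)
    also have "(u' x * x)^2 \<le> (u' x)^2" using x by (simp add: power_mult_distrib power_le_one mult_left_le)
    finally show "- (2 * u x * u' x * x) \<le> (u x)^2 / 2 + 2 * (u' x)^2" by simp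
  qed (auto intro!: int continuous_intros cu cu')
  also have "\<dots> = I / 2 + 2 * J" unfolding I_def J_def
    by (subst integral_add) (auto intro!: int continuous_intros cu cu')
  finally show "I \<le> 4 * J" by simp
  have "(u 0)^2 = integral {0..1} (\<lambda>x. - (2 * u x * u' x))"
    using integral_square_by_parts[OF du _ cu' _ u1, of "\<lambda>x. 1" "\<lambda>x. 0"] by (simp add: integral_neg)
  also have "\<dots> \<le> integral {0..1} (\<lambda>x. (u x)^2 + (u' x)^2)"
  proof (rule integral_le)
    fix x :: real
    show "- (2 * u x * u' x) \<le> (u x)^2 + (u' x)^2"
      using sum_squares_ge_zero[of "u x + u' x" 0] by (simp add: power2_eq_square algebra_simps)
  qed (auto intro!: int continuous_intros cu cu')
  also have "\<dots> = I + J" unfolding I_def J_def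
    by (subst integral_add) (auto intro!: int continuous_intros cu cu')
  finally show "(u 0)^2 \<le> 5 * J" using \<open>I \<le> 4 * J\<close> by simp
qed

lemma energy_has_derivative:
  assumes cu: "continuous_on ({0..1} \<times> {t0<..}) (\<lambda>(x,t). u x t)"
    and cut: "continuous_on ({0..1} \<times> {t0<..}) (\<lambda>(x,t). ut x t)"
    and du: "\<And>x s. x \<in> {0..1} \<Longrightarrow> s > t0 \<Longrightarrow> ((\<lambda>s. u x s) has_real_derivative ut x s) (at s)"
    and "t > t0"
  shows "(energy u has_real_derivative integral {0..1} (\<lambda>x. 2 * u x t * ut x t)) (at t)"
proof -
  have "((\<lambda>s. integral (cbox 0 1) (\<lambda>x. (u x s)^2)) has_field_derivative
          integral (cbox 0 1) (\<lambda>x. 2 * u x t * ut x t)) (at t within {t0<..})"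
  proof (rule leibniz_rule_field_derivative)
    fix s x :: real assume "s \<in> {t0<..}" "x \<in> cbox 0 1"
    hence "((\<lambda>s. u x s) has_real_derivative ut x s) (at s)" by (auto intro: du)
    hence "((\<lambda>s. (u x s)^2) has_real_derivative 2 * u x s * ut x s) (at s)"
      by (auto intro!: derivative_eq_intros)
    thus "((\<lambda>s. (u x s)^2) has_field_derivative 2 * u x s * ut x s) (at s within {t0<..})"
      by (rule has_field_derivative_at_within)
  next
    fix s :: real assume "s \<in> {t0<..}"
    thus "(\<lambda>x. (u x s)^2) integrable_on cbox 0 1"
      unfolding cbox_interval
      by (intro integrable_continuous_interval continuous_intros continuous_on_slice[OF cu])
  next
    show "continuous_on ({t0<..} \<times> cbox 0 1) (\<lambda>(s,x). 2 * u x s * ut x s)"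
      using continuous_on_swap_args[OF cu] continuous_on_swap_args[OF cut]
      by (auto intro!: continuous_intros simp: case_prod_unfold cbox_interval)
  qed (use \<open>t > t0\<close> in auto)
  thus ?thesis
    using at_within_open[of t "{t0<..}"] \<open>t > t0\<close> by (simp add: energy_def[abs_def] cbox_interval)
qed

locale heat_solution =
  fixes \<kappa> t0 :: real and u ux uxx ut :: "real \<Rightarrow> real \<Rightarrow> real"
  assumes continuous_u: "continuous_on ({0..1} \<times> {t0..}) (\<lambda>(x,t). u x t)"
    and deriv_x: "\<And>x t. x \<in> {0..1} \<Longrightarrow> t > t0 \<Longrightarrow>
      ((\<lambda>y. u y t) has_real_derivative ux x t) (at x within {0..1})"
    and deriv_xx: "\<And>x t. x \<in> {0..1} \<Longrightarrow> t > t0 \<Longrightarrow>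
      ((\<lambda>y. ux y t) has_real_derivative uxx x t) (at x within {0..1})"
    and deriv_t: "\<And>x t. x \<in> {0..1} \<Longrightarrow> t > t0 \<Longrightarrow>
      ((\<lambda>s. u x s) has_real_derivative ut x t) (at t)"
    and continuous_ux: "continuous_on ({0..1} \<times> {t0<..}) (\<lambda>(x,t). ux x t)"
    and continuous_uxx: "continuous_on ({0..1} \<times> {t0<..}) (\<lambda>(x,t). uxx x t)"
    and continuous_ut: "continuous_on ({0..1} \<times> {t0<..}) (\<lambda>(x,t). ut x t)"
    and heat_equation: "\<And>x t. x \<in> {0<..<1} \<Longrightarrow> t > t0 \<Longrightarrow> ut x t = \<kappa> * uxx x t"
    and boundary_right: "\<And>t. t \<ge> t0 \<Longrightarrow> u 1 t = 0"
begin

lemma energy_derivative: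
  assumes t: "t > t0"
  shows "(energy u has_real_derivative - 2 * \<kappa> * (u 0 t * ux 0 t) - 2 * \<kappa> * energy ux t) (at t)"
proof -
  have "integral {0..1} (\<lambda>x. 2 * u x t * ut x t) = integral {0..1} (\<lambda>x. (2 * \<kappa>) * (u x t * uxx x t))"
    using heat_equation t by (intro integral_spike[of "{0,1}"]) auto
  also have "\<dots> = 2 * \<kappa> * integral {0..1} (\<lambda>x. u x t * uxx x t)" by simp
  also have "integral {0..1} (\<lambda>x. u x t * uxx x t)
      = u 1 t * ux 1 t - u 0 t * ux 0 t - integral {0..1} (\<lambda>x. ux x t * ux x t)"
    using deriv_x deriv_xx t
    by (intro integration_by_parts_within continuous_on_slice[OF continuous_ux]
        continuous_on_slice[OF continuous_uxx]) auto
  finally have "integral {0..1} (\<lambda>x. 2 * u x t * ut x t)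
      = - 2 * \<kappa> * (u 0 t * ux 0 t) - 2 * \<kappa> * energy ux t"
    using boundary_right[of t] t by (simp add: energy_def power2_eq_square algebra_simps)
  moreover have "continuous_on ({0..1} \<times> {t0<..}) (\<lambda>(x,t). u x t)"
    by (rule continuous_on_subset[OF continuous_u]) auto
  ultimately show ?thesis
    using energy_has_derivative[OF _ continuous_ut deriv_t t] by simp
qed

lemma energy_le_gradient_energy: "t > t0 \<Longrightarrow> energy u t \<le> 4 * energy ux t"
  and boundary_left_le_gradient_energy: "t > t0 \<Longrightarrow> (u 0 t)^2 \<le> 5 * energy ux t"
  unfolding energy_def
  using poincare_unit_interval[of "\<lambda>y. u y t" "\<lambda>x. ux x t"] deriv_x boundary_right
    continuous_on_slice[OF continuous_ux]
  by auto

end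

lemma transmission_energy_derivative:
  assumes H1: "heat_solution \<kappa>1 t0 u1 u1x u1xx u1t" and H2: "heat_solution \<kappa>2 t0 u2 u2x u2xx u2t"
    and "a * \<kappa>1 = w * \<kappa>2" and "u1x 0 t + a * u2x 0 t = 0" and "u1 0 t = u2 0 t" and "t > t0"
  shows "((\<lambda>s. energy u1 s + w * energy u2 s) has_real_derivative
      - 2 * (\<kappa>1 * energy u1x t + w * \<kappa>2 * energy u2x t)) (at t)"
proof -
  have "\<kappa>1 * (u1 0 t * u1x 0 t) + w * (\<kappa>2 * (u2 0 t * u2x 0 t)) = 0"
    using assms(3-5) by (simp add: eq_neg_iff_add_eq_0[symmetric] algebra_simps)
  thus ?thesis
    using heat_solution.energy_derivative[OF H1 \<open>t > t0\<close>] heat_solution.energy_derivative[OF H2 \<open>t > t0\<close>]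
    by (auto intro!: derivative_eq_intros simp: algebra_simps)
qed

lemma transmission_energy_bounds:
  assumes H1: "heat_solution \<kappa>1 t0 u1 u1x u1xx u1t" and H2: "heat_solution \<kappa>2 t0 u2 u2x u2xx u2t"
    and "0 < \<kappa>2" "\<kappa>2 \<le> \<kappa>1" "0 < w" "t > t0"
  shows "energy u1 t + w * energy u2 t \<le> 4 / \<kappa>2 * (\<kappa>1 * energy u1x t + w * \<kappa>2 * energy u2x t)"
    and "(u1 0 t)^2 \<le> 5 / \<kappa>1 * (\<kappa>1 * energy u1x t + w * \<kappa>2 * energy u2x t)"
proof -
  have "energy u1 t + w * energy u2 t \<le> 4 * energy u1x t + w * (4 * energy u2x t)"
    using heat_solution.energy_le_gradient_energy[OF H1 \<open>t > t0\<close>]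
      heat_solution.energy_le_gradient_energy[OF H2 \<open>t > t0\<close>] \<open>0 < w\<close>
    by (intro add_mono mult_left_mono) auto
  also have "\<dots> \<le> 4 / \<kappa>2 * (\<kappa>1 * energy u1x t + w * \<kappa>2 * energy u2x t)"
    using assms(3-5) energy_nonneg[of u1x t] by (simp add: field_simps mult_right_mono)
  finally show "energy u1 t + w * energy u2 t \<le> 4 / \<kappa>2 * (\<kappa>1 * energy u1x t + w * \<kappa>2 * energy u2x t)" .
  have "(u1 0 t)^2 \<le> 5 * energy u1x t"
    by (rule heat_solution.boundary_left_le_gradient_energy[OF H1 \<open>t > t0\<close>])
  also have "\<dots> \<le> 5 / \<kappa>1 * (\<kappa>1 * energy u1x t + w * \<kappa>2 * energy u2x t)"
    using assms(3-5) energy_nonneg[of u2x t] by (simp add: field_simps)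
  finally show "(u1 0 t)^2 \<le> 5 / \<kappa>1 * (\<kappa>1 * energy u1x t + w * \<kappa>2 * energy u2x t)" .
qed

section \<open>Exponential decay of the coupled system\<close>

lemma exp_decay_of_differential_inequality:
  fixes W W' :: "real \<Rightarrow> real"
  assumes cont: "continuous_on {t0..} W"
    and deriv: "\<And>t. t > t0 \<Longrightarrow> (W has_real_derivative W' t) (at t)"
    and ineq: "\<And>t. t > t0 \<Longrightarrow> W' t \<le> - c * W t"
    and t: "t \<ge> t0"
  shows "W t \<le> exp (- c * (t - t0)) * W t0"
proof (cases "t = t0")
  case False
  hence "t0 < t" using t by simp
  define g where "g s = exp (c * s) * W s" for s
  have dg: "(g has_real_derivative exp (c * s) * (c * W s + W' s)) (at s)" if "s > t0" for s
    unfolding g_def using deriv[OF that] by (auto intro!: derivative_eq_intros simp: algebra_simps)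
  have "continuous_on {t0..t} g"
    unfolding g_def by (intro continuous_intros continuous_on_subset[OF cont]) auto
  then obtain z where z: "t0 < z" "z < t" and "g t - g t0 = (t - t0) * (exp (c * z) * (c * W z + W' z))"
    using MVT[OF \<open>t0 < t\<close>] dg DERIV_unique real_differentiable_def by (smt (verit, best))
  moreover have "exp (c * z) * (c * W z + W' z) \<le> 0"
    using ineq[OF z(1)] by (simp add: mult_nonneg_nonpos)
  ultimately have "exp (c * t) * W t \<le> exp (c * t0) * W t0"
    using \<open>t0 < t\<close> by (simp add: g_def) (smt (verit) mult_nonneg_nonpos)
  hence "exp (- (c * t)) * (exp (c * t) * W t) \<le> exp (- (c * t)) * (exp (c * t0) * W t0)"
    by (rule mult_left_mono) simp
  thus ?thesis by (simp add: exp_add[symmetric] exp_minus_inverse algebra_simps mult_exp_exp)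
qed simp

lemma bilinear_coupling_le:
  fixes P :: "'a::real_normed_vector \<Rightarrow> 'a \<Rightarrow> real"
  assumes bound: "\<And>x y. \<bar>P x y\<bar> \<le> K * norm x * norm y"
  shows "2 * u * P z b \<le> (norm z)^2 / 2 + 2 * K^2 * (norm b)^2 * u^2"
proof -
  have "2 * u * P z b \<le> 2 * \<bar>u\<bar> * \<bar>P z b\<bar>"
    by (metis abs_ge_self abs_mult abs_numeral)
  also have "\<dots> \<le> 2 * \<bar>u\<bar> * (K * norm z * norm b)"
    using bound[of z b] by (simp add: mult_left_mono)
  also have "\<dots> \<le> (norm z)^2 / 2 + 2 * K^2 * (norm b)^2 * u^2"
  proof -
    have "0 \<le> (norm z - 2 * K * norm b * \<bar>u\<bar>)^2 / 2" by simp
    also have "\<dots> = (norm z)^2 / 2 - 2 * \<bar>u\<bar> * (K * norm z * norm b) + 2 * K^2 * (norm b)^2 * \<bar>u\<bar>^2"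
      by (simp add: power2_eq_square field_simps abs_mult_self_eq)
    finally show ?thesis by (simp add: power2_abs)
  qed
  finally show ?thesis .
qed

lemma coupled_lyapunov_derivative_bound:
  fixes P :: "'a::real_normed_vector \<Rightarrow> 'a \<Rightarrow> real"
  assumes "bounded_bilinear P" and bound: "\<And>x y. \<bar>P x y\<bar> \<le> K * norm x * norm y"
    and lyapunov: "2 * P z y \<le> - (norm z ^ 2)"
    and D: "0 \<le> D" "V \<le> \<alpha> * D" "u^2 \<le> \<beta> * D"
    and "0 \<le> \<beta>" "\<alpha> > 0" "K > 0"
    and \<kappa>: "\<kappa> = 2 * K^2 * (norm b)^2 * \<beta> + 1"
    and c: "c = min (1 / \<alpha>) (1 / (2 * K))"
  shows "- 2 * \<kappa> * D + 2 * P z (y + u *\<^sub>R b) \<le> - c * (\<kappa> * V + P z z)"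
proof -
  interpret bounded_bilinear P by fact
  have "2 * u * P z b \<le> (norm z)^2 / 2 + 2 * K^2 * (norm b)^2 * u^2"
    by (rule bilinear_coupling_le[OF bound])
  also have "2 * K^2 * (norm b)^2 * u^2 \<le> (\<kappa> - 1) * D"
    using mult_left_mono[OF D(3), of "2 * K^2 * (norm b)^2"] by (simp add: \<kappa> mult_ac)
  finally have coupling: "2 * u * P z b \<le> (norm z)^2 / 2 + (\<kappa> - 1) * D" by simp
  have "0 \<le> c" "c \<le> 1 / \<alpha>" "c \<le> 1 / (2 * K)"
    using \<open>\<alpha> > 0\<close> \<open>K > 0\<close> by (simp_all add: c)
  hence "c * \<alpha> \<le> 1" "c * K \<le> 1 / 2"
    using \<open>\<alpha> > 0\<close> \<open>K > 0\<close> by (simp_all add: le_divide_eq mult_ac)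
  have "1 \<le> \<kappa>" using \<open>0 \<le> \<beta>\<close> by (simp add: \<kappa>)
  have "c * V \<le> D"
    using mult_left_mono[OF D(2) \<open>0 \<le> c\<close>] mult_right_mono[OF \<open>c * \<alpha> \<le> 1\<close> D(1)]
    by (simp add: mult.assoc)
  hence "c * (\<kappa> * V) \<le> \<kappa> * D"
    using mult_left_mono[of "c * V" D \<kappa>] \<open>1 \<le> \<kappa>\<close> by (simp add: mult_ac)
  moreover have "c * P z z \<le> (norm z)^2 / 2"
  proof -
    have "c * P z z \<le> c * (K * (norm z)^2)"
      using mult_left_mono[OF abs_le_D1[OF bound[of z z]] \<open>0 \<le> c\<close>]
      by (simp add: power2_eq_square mult_ac)
    also have "\<dots> \<le> (norm z)^2 / 2"
      using mult_right_mono[OF \<open>c * K \<le> 1 / 2\<close>, of "(norm z)^2"] by (simp add: mult_ac)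
    finally show ?thesis .
  qed
  moreover have "P z (y + u *\<^sub>R b) = P z y + u * P z b" by (simp add: add_right scaleR_right)
  ultimately show ?thesis using lyapunov coupling D(1) by (simp add: algebra_simps)
qed

lemma coupled_lyapunov_decay:
  fixes P :: "'a::real_normed_vector \<Rightarrow> 'a \<Rightarrow> real" and Z :: "real \<Rightarrow> 'a"
  assumes bilinear: "bounded_bilinear P" and symmetric: "\<And>x y. P x y = P y x"
    and bound: "\<And>x y. \<bar>P x y\<bar> \<le> K * norm x * norm y"
    and lyapunov: "\<And>x. 2 * P x (F x) \<le> - (norm x ^ 2)"
    and continuous_V: "continuous_on {t0..} V"
    and deriv_V: "\<And>t. t > t0 \<Longrightarrow> (V has_real_derivative - 2 * D t) (at t)"
    and D: "\<And>t. t > t0 \<Longrightarrow> 0 \<le> D t" "\<And>t. t > t0 \<Longrightarrow> V t \<le> \<alpha> * D t"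
      "\<And>t. t > t0 \<Longrightarrow> (u t)^2 \<le> \<beta> * D t"
    and deriv_Z: "\<And>t. t \<ge> t0 \<Longrightarrow> (Z has_vector_derivative F (Z t) + u t *\<^sub>R b) (at t within {t0..})"
    and constants: "0 \<le> \<beta>" "\<alpha> > 0" "K > 0"
      "\<kappa> = 2 * K^2 * (norm b)^2 * \<beta> + 1" "c = min (1 / \<alpha>) (1 / (2 * K))"
    and "t \<ge> t0"
  shows "\<kappa> * V t + P (Z t) (Z t) \<le> exp (- c * (t - t0)) * (\<kappa> * V t0 + P (Z t0) (Z t0))"
proof (rule exp_decay_of_differential_inequality[where W' = "\<lambda>s. - 2 * \<kappa> * D s + 2 * P (Z s) (F (Z s) + u s *\<^sub>R b)"])
  have "continuous_on {t0..} Z"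
    using deriv_Z has_vector_derivative_continuous continuous_on_eq_continuous_within by fastforce
  thus "continuous_on {t0..} (\<lambda>s. \<kappa> * V s + P (Z s) (Z s))"
    by (intro continuous_intros continuous_V bounded_bilinear.continuous_on[OF bilinear])
next
  fix s assume "s > t0"
  have "(Z has_vector_derivative F (Z s) + u s *\<^sub>R b) (at s)"
    using deriv_Z[of s] \<open>s > t0\<close> at_within_interior[of s "{t0..}"] by simp
  from bounded_bilinear.has_vector_derivative[OF bilinear this this]
  have "((\<lambda>s. P (Z s) (Z s)) has_real_derivative 2 * P (Z s) (F (Z s) + u s *\<^sub>R b)) (at s)"
    by (simp add: has_real_derivative_iff_has_vector_derivative symmetric[of _ "Z s"])
  thus "((\<lambda>s. \<kappa> * V s + P (Z s) (Z s)) has_real_derivative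
      - 2 * \<kappa> * D s + 2 * P (Z s) (F (Z s) + u s *\<^sub>R b)) (at s)"
    using deriv_V[OF \<open>s > t0\<close>] by (auto intro!: derivative_eq_intros)
  show "- 2 * \<kappa> * D s + 2 * P (Z s) (F (Z s) + u s *\<^sub>R b) \<le> - c * (\<kappa> * V s + P (Z s) (Z s))"
    by (rule coupled_lyapunov_derivative_bound[OF bilinear bound lyapunov D[OF \<open>s > t0\<close>] constants])
qed fact

lemma target_solution_components:
  assumes "target_solution eps y0 theta A B Gamma0 t0 Om1 Om2 Z"
  obtains Om1x Om2x Om1xx Om2xx Om1t Om2t where
    "heat_solution (eps / (1 + y0)^2) t0 Om1 Om1x Om1xx Om1t"
    "heat_solution (eps / (1 - y0)^2) t0 Om2 Om2x Om2xx Om2t"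
    "\<And>t. t > t0 \<Longrightarrow> Om1x 0 t + (1 + y0) / (1 - y0) * Om2x 0 t = 0"
    "\<And>t. t > t0 \<Longrightarrow> Om1 0 t = Om2 0 t"
    "\<And>t. t \<ge> t0 \<Longrightarrow> (Z has_vector_derivative
       (A + outer B Gamma0) *v Z t + (theta * Om1 0 t + (1 - theta) * Om2 0 t) *\<^sub>R B) (at t within {t0..})"
proof -
  from assms obtain Om1x Om2x Om1xx Om2xx Om1t Om2t where
    c1: "continuous_on ({0..1} \<times> {t0..}) (\<lambda>(x,t). Om1 x t)" and
    c2: "continuous_on ({0..1} \<times> {t0..}) (\<lambda>(x,t). Om2 x t)" and
    d: "\<forall>x\<in>{0..1}. \<forall>t>t0.
          ((\<lambda>y. Om1 y t) has_real_derivative Om1x x t) (at x within {0..1}) \<and>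
          ((\<lambda>y. Om2 y t) has_real_derivative Om2x x t) (at x within {0..1}) \<and>
          ((\<lambda>y. Om1x y t) has_real_derivative Om1xx x t) (at x within {0..1}) \<and>
          ((\<lambda>y. Om2x y t) has_real_derivative Om2xx x t) (at x within {0..1}) \<and>
          ((\<lambda>s. Om1 x s) has_real_derivative Om1t x t) (at t) \<and>
          ((\<lambda>s. Om2 x s) has_real_derivative Om2t x t) (at t)" and
    cc: "continuous_on ({0..1} \<times> {t0<..}) (\<lambda>(x,t). Om1x x t)"
      "continuous_on ({0..1} \<times> {t0<..}) (\<lambda>(x,t). Om2x x t)"
      "continuous_on ({0..1} \<times> {t0<..}) (\<lambda>(x,t). Om1xx x t)"
      "continuous_on ({0..1} \<times> {t0<..}) (\<lambda>(x,t). Om2xx x t)"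
      "continuous_on ({0..1} \<times> {t0<..}) (\<lambda>(x,t). Om1t x t)"
      "continuous_on ({0..1} \<times> {t0<..}) (\<lambda>(x,t). Om2t x t)" and
    pde: "\<forall>x\<in>{0<..<1}. \<forall>t>t0. Om1t x t = eps / (1 + y0)^2 * Om1xx x t \<and>
      Om2t x t = eps / (1 - y0)^2 * Om2xx x t" and
    left: "\<forall>t>t0. Om1x 0 t + (1 + y0) / (1 - y0) * Om2x 0 t = 0 \<and> Om1 0 t = Om2 0 t" and
    right: "\<forall>t\<ge>t0. Om1 1 t = 0 \<and> Om2 1 t = 0" and
    ode: "\<forall>t\<ge>t0. (Z has_vector_derivative
       (A + outer B Gamma0) *v Z t + (theta * Om1 0 t + (1 - theta) * Om2 0 t) *\<^sub>R B) (at t within {t0..})"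
    unfolding target_solution_def Let_def by blast
  have "heat_solution (eps / (1 + y0)^2) t0 Om1 Om1x Om1xx Om1t"
    using c1 d cc pde right by unfold_locales auto
  moreover have "heat_solution (eps / (1 - y0)^2) t0 Om2 Om2x Om2xx Om2t"
    using c2 d cc pde right by unfold_locales auto
  ultimately show thesis using left ode by (intro that) auto
qed

lemma target_solution_energy_dissipation:
  assumes eps: "eps > 0" and y0: "-1 < y0" "y0 < 0"
    and sol: "target_solution eps y0 theta A B Gamma0 t0 Om1 Om2 Z"
    and w_def: "w = (1 - y0) / (1 + y0)"
    and \<alpha>_def: "\<alpha> = 4 * (1 - y0)^2 / eps" and \<beta>_def: "\<beta> = 5 * (1 + y0)^2 / eps"
  defines "V \<equiv> \<lambda>t. energy Om1 t + w * energy Om2 t"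
  obtains D where "continuous_on {t0..} V"
    "\<And>t. t > t0 \<Longrightarrow> (V has_real_derivative - 2 * D t) (at t)"
    "\<And>t. t > t0 \<Longrightarrow> 0 \<le> D t"
    "\<And>t. t > t0 \<Longrightarrow> V t \<le> \<alpha> * D t"
    "\<And>t. t > t0 \<Longrightarrow> (theta * Om1 0 t + (1 - theta) * Om2 0 t)^2 \<le> \<beta> * D t"
proof -
  define eps1 eps2 a where "eps1 = eps / (1 + y0)^2" and "eps2 = eps / (1 - y0)^2"
    and "a = (1 + y0) / (1 - y0)"
  obtain Om1x Om2x Om1xx Om2xx Om1t Om2t where
    H1: "heat_solution eps1 t0 Om1 Om1x Om1xx Om1t" and H2: "heat_solution eps2 t0 Om2 Om2x Om2xx Om2t"
    and flux: "\<And>t. t > t0 \<Longrightarrow> Om1x 0 t + a * Om2x 0 t = 0"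
    and trace: "\<And>t. t > t0 \<Longrightarrow> Om1 0 t = Om2 0 t"
    using target_solution_components[OF sol] unfolding eps1_def eps2_def a_def by metis
  have "eps2 > 0" "eps2 \<le> eps1" "w > 0" "\<alpha> = 4 / eps2" "\<beta> = 5 / eps1"
    using eps y0 by (auto simp: eps1_def eps2_def w_def \<alpha>_def \<beta>_def frac_le power_mono)
  \<comment> \<open>the weight \<open>w\<close> makes the two flux terms at \<open>x = 0\<close> cancel\<close>
  have "p / q * (eps / p^2) = q / p * (eps / q^2)" if "p \<noteq> 0" "q \<noteq> 0" for p q :: real
    using that by (simp add: power2_eq_square field_simps)
  hence balance: "a * eps1 = w * eps2"
    using y0 unfolding a_def w_def eps1_def eps2_def by simp
  define D where "D t = eps1 * energy Om1x t + w * eps2 * energy Om2x t" for t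
  have "continuous_on {t0..} V"
    unfolding V_def
    by (intro continuous_intros continuous_on_energy heat_solution.continuous_u[OF H1]
        heat_solution.continuous_u[OF H2])
  moreover have "0 \<le> D t" for t
    using \<open>eps2 \<le> eps1\<close> \<open>eps2 > 0\<close> \<open>w > 0\<close> by (simp add: D_def energy_nonneg)
  moreover have "(theta * Om1 0 t + (1 - theta) * Om2 0 t)^2 = (Om1 0 t)^2" if "t > t0" for t
    using trace[OF that] by (simp add: algebra_simps)
  ultimately show thesis
    using transmission_energy_derivative[OF H1 H2 balance flux trace]
      transmission_energy_bounds[OF H1 H2 \<open>eps2 > 0\<close> \<open>eps2 \<le> eps1\<close> \<open>w > 0\<close>]
    by (intro that[of D]) (auto simp: V_def D_def \<open>\<alpha> = 4 / eps2\<close> \<open>\<beta> = 5 / eps1\<close>)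
qed

lemma target_solution_state_norm:
  assumes "target_solution eps y0 theta A B Gamma0 t0 Om1 Om2 Z" and "t \<ge> t0"
  shows "state_norm Om1 Om2 Z t = sqrt (energy Om1 t + energy Om2 t + (norm (Z t))^2)"
proof -
  obtain Om1x Om2x Om1xx Om2xx Om1t Om2t where
    "heat_solution (eps / (1 + y0)^2) t0 Om1 Om1x Om1xx Om1t"
    "heat_solution (eps / (1 - y0)^2) t0 Om2 Om2x Om2xx Om2t"
    using target_solution_components[OF assms(1)] by metis
  hence "continuous_on {0..1} (\<lambda>x. Om1 x t)" "continuous_on {0..1} (\<lambda>x. Om2 x t)"
    using assms(2) by (auto intro: continuous_on_slice heat_solution.continuous_u)
  hence "integral {0..1} (\<lambda>x. (Om1 x t)^2 + (Om2 x t)^2) = energy Om1 t + energy Om2 t"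
    unfolding energy_def by (intro integral_add integrable_continuous_interval continuous_intros)
  thus ?thesis by (simp add: state_norm_def)
qed

lemma weighted_energy_equivalence:
  fixes E1 E2 Q N :: real
  assumes "0 \<le> E1" "0 \<le> E2" "1 \<le> w" "0 < \<kappa>" "0 < m" "m * N \<le> Q" "Q \<le> K * N" "0 \<le> N"
  shows "min \<kappa> m * (E1 + E2 + N) \<le> \<kappa> * (E1 + w * E2) + Q"
    and "\<kappa> * (E1 + w * E2) + Q \<le> max (\<kappa> * w) K * (E1 + E2 + N)"
proof -
  have "E2 \<le> w * E2" "E1 + w * E2 \<le> w * (E1 + E2)"
    using assms mult_right_mono[of 1 w E1] mult_right_mono[of 1 w E2] by (simp_all add: algebra_simps)
  have "min \<kappa> m * (E1 + E2) \<le> min \<kappa> m * (E1 + w * E2)"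
    using \<open>E2 \<le> w * E2\<close> assms by (intro mult_left_mono) auto
  also have "\<dots> \<le> \<kappa> * (E1 + w * E2)"
    using \<open>E2 \<le> w * E2\<close> assms by (intro mult_right_mono) auto
  finally have "min \<kappa> m * (E1 + E2) \<le> \<kappa> * (E1 + w * E2)" .
  moreover have "min \<kappa> m * N \<le> Q" using mult_right_mono[of "min \<kappa> m" m N] assms by linarith
  ultimately show "min \<kappa> m * (E1 + E2 + N) \<le> \<kappa> * (E1 + w * E2) + Q" by (simp add: algebra_simps)
  have "\<kappa> * (E1 + w * E2) \<le> \<kappa> * w * (E1 + E2)"
    using mult_left_mono[OF \<open>E1 + w * E2 \<le> w * (E1 + E2)\<close>, of \<kappa>] assms by (simp add: mult.assoc)
  also have "\<dots> \<le> max (\<kappa> * w) K * (E1 + E2)" using assms by (intro mult_right_mono) auto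
  finally show "\<kappa> * (E1 + w * E2) + Q \<le> max (\<kappa> * w) K * (E1 + E2 + N)"
    using mult_right_mono[of K "max (\<kappa> * w) K" N] assms by (simp add: algebra_simps)
qed

lemma sqrt_decay_of_equivalent_functional:
  fixes S S0 W W0 :: real
  assumes "0 < lo" "lo * S \<le> W" "W \<le> e * W0" "W0 \<le> hi * S0" "0 \<le> e"
  shows "sqrt S \<le> sqrt (hi / lo) * sqrt e * sqrt S0"
proof -
  have "lo * S \<le> lo * (hi / lo * e * S0)"
    using assms order.trans[OF \<open>W \<le> e * W0\<close> mult_left_mono[OF \<open>W0 \<le> hi * S0\<close> \<open>0 \<le> e\<close>]]
    by (simp add: field_simps)
  hence "S \<le> hi / lo * e * S0" using \<open>0 < lo\<close> by (simp add: pos_le_divide_eq mult.commute)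
  thus ?thesis by (simp add: real_sqrt_mult[symmetric])
qed

lemma target_solution_exponential_decay:
  fixes P :: "real^'n \<Rightarrow> real^'n \<Rightarrow> real" and Z :: "real \<Rightarrow> real^'n"
  assumes parameters: "eps > 0" "-1 < y0" "y0 < 0"
    and sol: "target_solution eps y0 theta A B Gamma0 t0 Om1 Om2 Z"
    and bilinear: "bounded_bilinear P" and symmetric: "\<And>x y. P x y = P y x"
    and positive: "\<And>x. m * (norm x)^2 \<le> P x x" and "m > 0"
    and bound: "\<And>x y. \<bar>P x y\<bar> \<le> K * norm x * norm y" and "K > 0"
    and lyapunov: "\<And>x. 2 * P x ((A + outer B Gamma0) *v x) \<le> - (norm x ^ 2)"
    and w_def: "w = (1 - y0) / (1 + y0)"
    and \<alpha>_def: "\<alpha> = 4 * (1 - y0)^2 / eps" and \<beta>_def: "\<beta> = 5 * (1 + y0)^2 / eps"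
    and \<kappa>_def: "\<kappa> = 2 * K^2 * (norm B)^2 * \<beta> + 1" and c_def: "c = min (1 / \<alpha>) (1 / (2 * K))"
    and "t \<ge> t0"
  shows "state_norm Om1 Om2 Z t
    \<le> sqrt (max (\<kappa> * w) K / min \<kappa> m) * exp (- (c / 2) * (t - t0)) * state_norm Om1 Om2 Z t0"
proof -
  have constants: "0 \<le> \<beta>" "\<alpha> > 0" "1 \<le> w"
    using parameters by (auto simp: w_def \<alpha>_def \<beta>_def)
  have "0 \<le> 2 * K^2 * (norm B)^2 * \<beta>" using constants by (intro mult_nonneg_nonneg) auto
  hence "\<kappa> > 0" unfolding \<kappa>_def by linarith
  define W where "W s = \<kappa> * (energy Om1 s + w * energy Om2 s) + P (Z s) (Z s)" for s
  define S where "S s = energy Om1 s + energy Om2 s + (norm (Z s))^2" for s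
  obtain D where energy: "continuous_on {t0..} (\<lambda>s. energy Om1 s + w * energy Om2 s)"
    "\<And>s. s > t0 \<Longrightarrow> ((\<lambda>s. energy Om1 s + w * energy Om2 s) has_real_derivative - 2 * D s) (at s)"
    "\<And>s. s > t0 \<Longrightarrow> 0 \<le> D s" "\<And>s. s > t0 \<Longrightarrow> energy Om1 s + w * energy Om2 s \<le> \<alpha> * D s"
    "\<And>s. s > t0 \<Longrightarrow> (theta * Om1 0 s + (1 - theta) * Om2 0 s)^2 \<le> \<beta> * D s"
    by (rule target_solution_energy_dissipation[OF parameters sol w_def \<alpha>_def \<beta>_def], rule that)
  have ode: "(Z has_vector_derivative (A + outer B Gamma0) *v Z s
      + (theta * Om1 0 s + (1 - theta) * Om2 0 s) *\<^sub>R B) (at s within {t0..})" if "s \<ge> t0" for s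
    by (rule target_solution_components[OF sol]) (use that in blast)
  have decay: "W t \<le> exp (- c * (t - t0)) * W t0"
    unfolding W_def
    by (rule coupled_lyapunov_decay[where F = "(*v) (A + outer B Gamma0)", OF bilinear symmetric bound
          lyapunov energy ode constants(1,2) \<open>K > 0\<close> \<kappa>_def c_def \<open>t \<ge> t0\<close>])
  have "P z z \<le> K * (norm z)^2" for z
    using abs_le_D1[OF bound[of z z]] by (simp add: power2_eq_square mult.assoc)
  note equivalence = weighted_energy_equivalence[OF energy_nonneg energy_nonneg \<open>1 \<le> w\<close> \<open>\<kappa> > 0\<close>
      \<open>m > 0\<close> positive this zero_le_power2]
  have "min \<kappa> m * S t \<le> W t" "W t0 \<le> max (\<kappa> * w) K * S t0"
    unfolding W_def S_def by (rule equivalence)+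
  from sqrt_decay_of_equivalent_functional[OF _ this(1) decay this(2)]
  have "sqrt (S t) \<le> sqrt (max (\<kappa> * w) K / min \<kappa> m) * sqrt (exp (- c * (t - t0))) * sqrt (S t0)"
    using \<open>\<kappa> > 0\<close> \<open>m > 0\<close> by simp
  moreover have "sqrt (exp (- c * (t - t0))) = exp (- (c / 2) * (t - t0))"
    by (rule real_sqrt_unique) (simp_all add: power2_eq_square exp_add[symmetric])
  ultimately show ?thesis
    using target_solution_state_norm[OF sol] \<open>t \<ge> t0\<close> by (simp add: S_def)
qed

theorem lemma1:
  fixes eps y0 theta t0 :: real
    and A :: "real^'n^'n" and B Gamma0 :: "real^'n"
  assumes "eps > 0" and "-1 < y0" and "y0 < 0"
    and "0 \<le> theta" and "theta \<le> 1"
    and "hurwitz (A + outer B Gamma0)"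
  shows "\<exists>Pi mu. Pi > 0 \<and> mu > 0 \<and>
    (\<forall>Om1 Om2 (Z :: real \<Rightarrow> real^'n).
       target_solution eps y0 theta A B Gamma0 t0 Om1 Om2 Z \<longrightarrow>
       (\<forall>t\<ge>t0. state_norm Om1 Om2 Z t \<le> Pi * exp (- mu * (t - t0)) * state_norm Om1 Om2 Z t0))"
proof -
  obtain P m where bilinear: "bounded_bilinear P" and symmetric: "\<And>x y. P x y = P y x"
    and "m > 0" and positive: "\<And>x. m * (norm x)^2 \<le> P x x"
    and lyapunov: "\<And>x. 2 * P x ((A + outer B Gamma0) *v x) \<le> - (norm x ^ 2)"
    by (rule hurwitz_lyapunov_form[OF assms(6)], rule that)
  obtain K where "K > 0" and bound: "\<And>x y. \<bar>P x y\<bar> \<le> K * norm x * norm y"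
    using bounded_bilinear.pos_bounded[OF bilinear] by (auto simp: mult_ac)
  define w \<alpha> \<beta> where "w = (1 - y0) / (1 + y0)" and "\<alpha> = 4 * (1 - y0)^2 / eps"
    and "\<beta> = 5 * (1 + y0)^2 / eps"
  define \<kappa> c where "\<kappa> = 2 * K^2 * (norm B)^2 * \<beta> + 1" and "c = min (1 / \<alpha>) (1 / (2 * K))"
  have "0 \<le> 2 * K^2 * (norm B)^2 * \<beta>" using assms(1) by (simp add: \<beta>_def)
  hence "\<kappa> > 0" unfolding \<kappa>_def by linarith
  moreover have "c > 0" "w > 0" using assms(1-3) \<open>K > 0\<close> by (auto simp: c_def w_def \<alpha>_def)
  ultimately have "sqrt (max (\<kappa> * w) K / min \<kappa> m) > 0 \<and> c / 2 > 0"
    using \<open>m > 0\<close> \<open>K > 0\<close> by auto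
  with target_solution_exponential_decay[OF assms(1-3) _ bilinear symmetric positive \<open>m > 0\<close>
      bound \<open>K > 0\<close> lyapunov w_def \<alpha>_def \<beta>_def \<kappa>_def c_def]
  show ?thesis by blast
qed

end
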